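(* Let $\mathbf{B}_{\iota,f}$ be a bridge from an encryption scheme $\mathscr{S}_1$ to an encryption scheme $\mathscr{S}_2$. If the bridge $\mathbf{B}_{\iota,f}$ is IND-CPA secure, then the encryption scheme $\mathscr{S}_1$ is IND-CPA secure.
   Context: $\lambda$ denotes the security parameter; a function $\mu:\mathbb{N}\to[0,\infty)$ is negligible if for every positive integer $c$ there is $N_c$ with $\mu(n)<n^{-c}$ for all $n\ge N_c$. An encryption scheme $\mathscr{S}=(\mathscr{P},\mathscr{C},\mathrm{KeyGen},\mathrm{Enc},\mathrm{Dec})$ consists of finite sets $\mathscr{P}$ (plaintexts), $\mathscr{C}$ (ciphertexts) and PPT algorithms: $\mathrm{KeyGen}(1^\lambda)$ outputs a secret key $sk$ and public key $pk$; $\mathrm{Enc}(pk,m)$ outputs $c\in\mathscr{C}$ for $m\in\mathscr{P}$; $\mathrm{Dec}(sk,c)$ outputs an element of $\mathscr{P}$; with $\Pr[\mathrm{Dec}(sk,\mathrm{Enc}(pk,m))=m]=1-\mathrm{negl}(\lambda)$ (probability over key generation, encryption and uniform $m\in\mathscr{P}$). (A symmetric scheme is one with $pk=sk$; in security games its public key is replaced by access to an encryption oracle.) A secret key is of level $\lambda$ if it is output by $\mathrm{KeyGen}(1^\lambda)$. IND-CPA security: for a bit $b$ and PPT adversary $\mathcal{A}$, the experiment $\mathrm{Exp}_b[\mathcal{A}](1^\lambda)$ runs $(pk,sk)\leftarrow\mathrm{KeyGen}(1^\lambda)$, gets $(m_0,m_1)\leftarrow\mathcal{A}(1^\lambda,pk)$,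 computes $ct\leftarrow\mathrm{Enc}(pk,m_b)$ and returns $b'\leftarrow\mathcal{A}(ct)$. The advantage is $|\Pr[\mathrm{Exp}_0[\mathcal{A}]=1]-\Pr[\mathrm{Exp}_1[\mathcal{A}]=1]|$; the scheme is IND-CPA secure if every PPT adversary has negligible advantage. A bridge $\mathbf{B}_{\iota,f}$ from $\mathscr{S}_1=(\mathscr{P}_1,\mathscr{C}_1,\mathrm{KeyGen}_1,\mathrm{Enc}_1,\mathrm{Dec}_1)$ to $\mathscr{S}_2=(\mathscr{P}_2,\mathscr{C}_2,\mathrm{KeyGen}_2,\mathrm{Enc}_2,\mathrm{Dec}_2)$ consists of: (1) an injective map $\iota:\mathscr{P}_1\to\mathscr{P}_2$ computable by a deterministic polynomial-time algorithm, such that a deterministic polynomial-time algorithm computes $\iota^{-1}$ (outputting $\perp$ off the image); (2) a PPT bridge key generation algorithm which on input $1^\lambda$ runs $\mathrm{KeyGen}_1(1^\lambda)$ to get $(sk_1,pk_1)$, then uses $sk_1$ to find a secret key $sk_2$ of level $\lambda$ for $\mathscr{S}_2$ and calls the key generation of $\mathscr{S}_2$ to produce $pk_2$, and finally on input $(sk_1,pk_1,sk_2,pk_2)$ outputs a bridge key $bk$; (3) a PPT algorithm $f$ taking $bk$ and $c_1\in\mathscr{C}_1$ and outputting $c_2\in\mathscr{C}_2$; such that $\Pr[\mathrm{Dec}_2(sk_2,f(bk,\mathrm{Enc}_1(pk_1,m)))=\iota(m)]=1-\mathrm{negl}(\lambda)$ for uniform $m\in\mathscr{P}_1$. The encryption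 scheme $\mathscr{G}_f$ associated to the bridge: plaintext space $\mathscr{P}_1$, ciphertext space $\mathscr{C}_1\times\mathscr{C}_2$; its key generation runs the bridge key generation to get $sk_1,pk_1,sk_2,pk_2,bk$ and sets secret key $(sk_1,sk_2)$ and public key $(pk_1,pk_2,bk)$; $\mathrm{Enc}_{\mathscr{G}_f}(m)=(a,f(bk,b))$ where $a,b\leftarrow\mathrm{Enc}_1(pk_1,m)$ are independent encryptions; $\mathrm{Dec}_{\mathscr{G}_f}((c_1,c_2))=\mathrm{Dec}_1(sk_1,c_1)$. The bridge $\mathbf{B}_{\iota,f}$ is called IND-CPA secure if $\mathscr{G}_f$ is IND-CPA secure. *)

theory Defs
  imports "HOL-Probability.Probability_Mass_Function"
begin

definition negligible :: "(nat \<Rightarrow> real) \<Rightarrow> bool" where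
  "negligible \<mu> \<longleftrightarrow> (\<forall>n. 0 \<le> \<mu> n) \<and>
     (\<forall>c::nat. c > 0 \<longrightarrow> (\<exists>N. \<forall>n\<ge>N. \<mu> n < inverse (real n ^ c)))"

definition correct_scheme ::
  "(nat \<Rightarrow> ('sk \<times> 'pk) pmf) \<Rightarrow> ('pk \<Rightarrow> 'p \<Rightarrow> 'c pmf) \<Rightarrow> ('sk \<Rightarrow> 'c \<Rightarrow> 'p) \<Rightarrow> bool"
where
  "correct_scheme KeyGen Enc Dec \<longleftrightarrow>
     negligible (\<lambda>n. 1 - pmf (do {
        (sk, pk) \<leftarrow> KeyGen n;
        m \<leftarrow> pmf_of_set (UNIV :: 'p set);
        c \<leftarrow> Enc pk m;
        return_pmf (Dec sk c = m)}) True)"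

text \<open>A (two-stage) IND-CPA adversary: the first stage gets 1^lambda and pk and outputs
  a pair of messages together with its internal state; the second stage gets the state
  and the challenge ciphertext and outputs a bit.\<close>
type_synonym ('pk, 'p, 'c, 's) adversary =
  "(nat \<Rightarrow> 'pk \<Rightarrow> (('p \<times> 'p) \<times> 's) pmf) \<times> ('s \<Rightarrow> 'c \<Rightarrow> bool pmf)"

definition ind_cpa_exp ::
  "(nat \<Rightarrow> ('sk \<times> 'pk) pmf) \<Rightarrow> ('pk \<Rightarrow> 'p \<Rightarrow> 'c pmf) \<Rightarrow> ('pk, 'p, 'c, 's) adversary
    \<Rightarrow> bool \<Rightarrow> nat \<Rightarrow> bool pmf"
where
  "ind_cpa_exp KeyGen Enc \<A> b n = do {
      (sk, pk) \<leftarrow> KeyGen n;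
      ((m0, m1), st) \<leftarrow> fst \<A> n pk;
      ct \<leftarrow> Enc pk (if b then m1 else m0);
      snd \<A> st ct }"

definition ind_cpa_adv ::
  "(nat \<Rightarrow> ('sk \<times> 'pk) pmf) \<Rightarrow> ('pk \<Rightarrow> 'p \<Rightarrow> 'c pmf) \<Rightarrow> ('pk, 'p, 'c, 's) adversary
    \<Rightarrow> nat \<Rightarrow> real"
where
  "ind_cpa_adv KeyGen Enc \<A> n =
     \<bar>pmf (ind_cpa_exp KeyGen Enc \<A> False n) True - pmf (ind_cpa_exp KeyGen Enc \<A> True n) True\<bar>"

definition ind_cpa_secure ::
  "(nat \<Rightarrow> ('sk \<times> 'pk) pmf) \<Rightarrow> ('pk \<Rightarrow> 'p \<Rightarrow> 'c pmf) \<Rightarrow> ('pk, 'p, 'c, 's) adversary set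
    \<Rightarrow> bool"
where
  "ind_cpa_secure KeyGen Enc PPT \<longleftrightarrow>
     (\<forall>\<A>\<in>PPT. negligible (ind_cpa_adv KeyGen Enc \<A>))"

definition bridge_keygen ::
  "(nat \<Rightarrow> ('sk1 \<times> 'pk1) pmf) \<Rightarrow> (nat \<Rightarrow> 'sk1 \<Rightarrow> 'sk2 pmf) \<Rightarrow> (nat \<Rightarrow> 'sk2 \<Rightarrow> 'pk2 pmf)
    \<Rightarrow> ('sk1 \<Rightarrow> 'pk1 \<Rightarrow> 'sk2 \<Rightarrow> 'pk2 \<Rightarrow> 'bk pmf)
    \<Rightarrow> nat \<Rightarrow> ('sk1 \<times> 'pk1 \<times> 'sk2 \<times> 'pk2 \<times> 'bk) pmf"
where
  "bridge_keygen KeyGen1 FindSk2 GenPk2 BK n = do {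
      (sk1, pk1) \<leftarrow> KeyGen1 n;
      sk2 \<leftarrow> FindSk2 n sk1;
      pk2 \<leftarrow> GenPk2 n sk2;
      bk \<leftarrow> BK sk1 pk1 sk2 pk2;
      return_pmf (sk1, pk1, sk2, pk2, bk) }"

text \<open>The bridge axioms (the algorithmic / polynomial-time requirements are not modelled).\<close>
definition is_bridge ::
  "(nat \<Rightarrow> ('sk1 \<times> 'pk1) pmf) \<Rightarrow> ('pk1 \<Rightarrow> 'p1 \<Rightarrow> 'c1 pmf) \<Rightarrow> ('sk1 \<Rightarrow> 'c1 \<Rightarrow> 'p1)
   \<Rightarrow> (nat \<Rightarrow> ('sk2 \<times> 'pk2) pmf) \<Rightarrow> ('pk2 \<Rightarrow> 'p2 \<Rightarrow> 'c2 pmf) \<Rightarrow> ('sk2 \<Rightarrow> 'c2 \<Rightarrow> 'p2)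
   \<Rightarrow> ('p1 \<Rightarrow> 'p2) \<Rightarrow> (nat \<Rightarrow> 'sk1 \<Rightarrow> 'sk2 pmf) \<Rightarrow> (nat \<Rightarrow> 'sk2 \<Rightarrow> 'pk2 pmf)
   \<Rightarrow> ('sk1 \<Rightarrow> 'pk1 \<Rightarrow> 'sk2 \<Rightarrow> 'pk2 \<Rightarrow> 'bk pmf) \<Rightarrow> ('bk \<Rightarrow> 'c1 \<Rightarrow> 'c2 pmf) \<Rightarrow> bool"
where
  "is_bridge KeyGen1 Enc1 Dec1 KeyGen2 Enc2 Dec2 \<iota> FindSk2 GenPk2 BK f \<longleftrightarrow>
     inj \<iota> \<and>
     (\<forall>n sk1 pk1 sk2. (sk1, pk1) \<in> set_pmf (KeyGen1 n) \<longrightarrow> sk2 \<in> set_pmf (FindSk2 n sk1)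
         \<longrightarrow> sk2 \<in> fst ` set_pmf (KeyGen2 n)) \<and>
     (\<forall>n sk2 pk2. sk2 \<in> fst ` set_pmf (KeyGen2 n) \<longrightarrow> pk2 \<in> set_pmf (GenPk2 n sk2)
         \<longrightarrow> (sk2, pk2) \<in> set_pmf (KeyGen2 n)) \<and>
     negligible (\<lambda>n. 1 - pmf (do {
        (sk1, pk1, sk2, pk2, bk) \<leftarrow> bridge_keygen KeyGen1 FindSk2 GenPk2 BK n;
        m \<leftarrow> pmf_of_set (UNIV :: 'p1 set);
        c1 \<leftarrow> Enc1 pk1 m;
        c2 \<leftarrow> f bk c1;
        return_pmf (Dec2 sk2 c2 = \<iota> m)}) True)"

definition G_keygen ::
  "(nat \<Rightarrow> ('sk1 \<times> 'pk1) pmf) \<Rightarrow> (nat \<Rightarrow> 'sk1 \<Rightarrow> 'sk2 pmf) \<Rightarrow> (nat \<Rightarrow> 'sk2 \<Rightarrow> 'pk2 pmf)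
    \<Rightarrow> ('sk1 \<Rightarrow> 'pk1 \<Rightarrow> 'sk2 \<Rightarrow> 'pk2 \<Rightarrow> 'bk pmf)
    \<Rightarrow> nat \<Rightarrow> (('sk1 \<times> 'sk2) \<times> ('pk1 \<times> 'pk2 \<times> 'bk)) pmf"
where
  "G_keygen KeyGen1 FindSk2 GenPk2 BK n =
     map_pmf (\<lambda>(sk1, pk1, sk2, pk2, bk). ((sk1, sk2), (pk1, pk2, bk)))
       (bridge_keygen KeyGen1 FindSk2 GenPk2 BK n)"

definition G_enc ::
  "('pk1 \<Rightarrow> 'p1 \<Rightarrow> 'c1 pmf) \<Rightarrow> ('bk \<Rightarrow> 'c1 \<Rightarrow> 'c2 pmf)
    \<Rightarrow> ('pk1 \<times> 'pk2 \<times> 'bk) \<Rightarrow> 'p1 \<Rightarrow> ('c1 \<times> 'c2) pmf"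
where
  "G_enc Enc1 f pk m = (case pk of (pk1, pk2, bk) \<Rightarrow> do {
      a \<leftarrow> Enc1 pk1 m;
      b \<leftarrow> Enc1 pk1 m;
      c2 \<leftarrow> f bk b;
      return_pmf (a, c2) })"

definition G_dec :: "('sk1 \<Rightarrow> 'c1 \<Rightarrow> 'p1) \<Rightarrow> ('sk1 \<times> 'sk2) \<Rightarrow> ('c1 \<times> 'c2) \<Rightarrow> 'p1" where
  "G_dec Dec1 sk c = Dec1 (fst sk) (fst c)"

end

theory Submission
  imports Defs
begin

text \<open>An adversary against S1 is turned into one against G_f that discards the S2 public
  key, the bridge key and the bridged ciphertext. Key generation and encryption of G_f
  project onto those of S1, so the two IND-CPA experiments coincide and the advantages are
  equal.\<close>

lemma ind_cpa_exp_projection: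
  assumes keygen: "\<And>n. map_pmf (\<pi> \<circ> snd) (KeyGen n) = map_pmf snd (KeyGen' n)"
    and enc: "\<And>pk m. map_pmf \<rho> (Enc pk m) = Enc' (\<pi> pk) m"
  shows "ind_cpa_exp KeyGen Enc ((\<lambda>n pk. fst \<A> n (\<pi> pk)), (\<lambda>st c. snd \<A> st (\<rho> c))) b n
       = ind_cpa_exp KeyGen' Enc' \<A> b n"
proof -
  define game where "game pk = do {
      ((m0, m1), st) \<leftarrow> fst \<A> n pk;
      ct \<leftarrow> Enc' pk (if b then m1 else m0);
      snd \<A> st ct }" for pk
  have "ind_cpa_exp KeyGen Enc ((\<lambda>n pk. fst \<A> n (\<pi> pk)), (\<lambda>st c. snd \<A> st (\<rho> c))) b n
      = bind_pmf (KeyGen n) (\<lambda>(sk, pk). game (\<pi> pk))"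
    by (simp add: ind_cpa_exp_def game_def enc[symmetric] bind_map_pmf)
  also have "\<dots> = bind_pmf (map_pmf (\<pi> \<circ> snd) (KeyGen n)) game"
    by (simp add: bind_map_pmf case_prod_unfold)
  also have "\<dots> = bind_pmf (KeyGen' n) (\<lambda>(sk, pk). game pk)"
    by (simp add: keygen bind_map_pmf case_prod_unfold)
  also have "\<dots> = ind_cpa_exp KeyGen' Enc' \<A> b n"
    by (simp add: ind_cpa_exp_def game_def)
  finally show ?thesis .
qed

lemma ind_cpa_adv_projection:
  assumes "\<And>n. map_pmf (\<pi> \<circ> snd) (KeyGen n) = map_pmf snd (KeyGen' n)"
    and "\<And>pk m. map_pmf \<rho> (Enc pk m) = Enc' (\<pi> pk) m"
  shows "ind_cpa_adv KeyGen Enc ((\<lambda>n pk. fst \<A> n (\<pi> pk)), (\<lambda>st c. snd \<A> st (\<rho> c)))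
       = ind_cpa_adv KeyGen' Enc' \<A>"
  unfolding ind_cpa_adv_def ind_cpa_exp_projection[of \<pi> KeyGen KeyGen' \<rho> Enc Enc', OF assms] ..

lemma ind_cpa_secure_projection:
  assumes "\<And>n. map_pmf (\<pi> \<circ> snd) (KeyGen n) = map_pmf snd (KeyGen' n)"
    and "\<And>pk m. map_pmf \<rho> (Enc pk m) = Enc' (\<pi> pk) m"
    and "\<And>\<A>. \<A> \<in> PPT' \<Longrightarrow> ((\<lambda>n pk. fst \<A> n (\<pi> pk)), (\<lambda>st c. snd \<A> st (\<rho> c))) \<in> PPT"
    and "ind_cpa_secure KeyGen Enc PPT"
  shows "ind_cpa_secure KeyGen' Enc' PPT'"
  using assms by (metis ind_cpa_secure_def ind_cpa_adv_projection)

lemma G_keygen_public_key_marginal: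
  "map_pmf (fst \<circ> snd) (G_keygen KeyGen1 FindSk2 GenPk2 BK n) = map_pmf snd (KeyGen1 n)"
  by (simp add: G_keygen_def bridge_keygen_def map_pmf_def bind_assoc_pmf bind_return_pmf
      bind_pmf_const case_prod_unfold)

lemma G_enc_first_component:
  "map_pmf fst (G_enc Enc1 f pk m) = Enc1 (fst pk) m"
  by (simp add: G_enc_def map_pmf_def bind_assoc_pmf bind_return_pmf bind_pmf_const
      case_prod_unfold bind_return_pmf')

theorem proposition1:
  fixes KeyGen1 :: "nat \<Rightarrow> ('sk1 \<times> 'pk1) pmf"
    and Enc1 :: "'pk1 \<Rightarrow> 'p1::finite \<Rightarrow> 'c1::finite pmf"
    and Dec1 :: "'sk1 \<Rightarrow> 'c1 \<Rightarrow> 'p1"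
    and KeyGen2 :: "nat \<Rightarrow> ('sk2 \<times> 'pk2) pmf"
    and Enc2 :: "'pk2 \<Rightarrow> 'p2::finite \<Rightarrow> 'c2::finite pmf"
    and Dec2 :: "'sk2 \<Rightarrow> 'c2 \<Rightarrow> 'p2"
    and \<iota> :: "'p1 \<Rightarrow> 'p2"
    and FindSk2 :: "nat \<Rightarrow> 'sk1 \<Rightarrow> 'sk2 pmf"
    and GenPk2 :: "nat \<Rightarrow> 'sk2 \<Rightarrow> 'pk2 pmf"
    and BK :: "'sk1 \<Rightarrow> 'pk1 \<Rightarrow> 'sk2 \<Rightarrow> 'pk2 \<Rightarrow> 'bk pmf"
    and f :: "'bk \<Rightarrow> 'c1 \<Rightarrow> 'c2 pmf"
    and PPT1 :: "('pk1, 'p1, 'c1, 's) adversary set"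
    and PPTG :: "('pk1 \<times> 'pk2 \<times> 'bk, 'p1, 'c1 \<times> 'c2, 's) adversary set"
  assumes S1: "correct_scheme KeyGen1 Enc1 Dec1"
    and S2: "correct_scheme KeyGen2 Enc2 Dec2"
    and bridge: "is_bridge KeyGen1 Enc1 Dec1 KeyGen2 Enc2 Dec2 \<iota> FindSk2 GenPk2 BK f"
    and PPT_closed: "\<And>\<A>. \<A> \<in> PPT1 \<Longrightarrow>
          ((\<lambda>n pk. fst \<A> n (fst pk)), (\<lambda>st c. snd \<A> st (fst c))) \<in> PPTG"
    and bridge_secure: "ind_cpa_secure (G_keygen KeyGen1 FindSk2 GenPk2 BK) (G_enc Enc1 f) PPTG"
  shows "ind_cpa_secure KeyGen1 Enc1 PPT1"
  using G_keygen_public_key_marginal G_enc_first_component PPT_closed bridge_secure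
  by (rule ind_cpa_secure_projection)

end
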